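(* Let $G=(V,E)$ be a finite simple graph and let $C\subseteq V$. Let $x\in\{0,1\}^{V}$ and $F=\{v\in V\colon x_v=1\}$. Then $F$ is a fort of $G$ with $F\subseteq V\setminus\mathrm{cl}(C)$ if and only if $x$ satisfies: (a) $\sum_{v\in V}x_v\geq1$; (b) $x_u-x_v+\sum_{w\in N(u)\setminus\{v\}}x_w\geq0$ for all $v\in V$ and all $u\in N(v)$; (c) $x_v=0$ for all $v\in C$.
   Context: $N(u)$ denotes the neighborhood of $u$. A fort of $G$ is a non-empty set $F\subseteq V$ such that no vertex $u\in V\setminus F$ has exactly one neighbor in $F$. The closure $\mathrm{cl}(C)$ of $C$ is the set of filled vertices obtained by starting with the vertices of $C$ filled and repeatedly applying the standard color change rule (a filled vertex $u$ forces a non-filled vertex $v$ to become filled if $v$ is the only non-filled neighbor of $u$) until no more forces are possible. *)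

theory Defs
  imports Main
begin

definition simple_graph :: "'a set \<Rightarrow> ('a \<Rightarrow> 'a \<Rightarrow> bool) \<Rightarrow> bool" where
  "simple_graph V E \<longleftrightarrow> finite V \<and> (\<forall>u v. E u v \<longrightarrow> u \<in> V \<and> v \<in> V)
     \<and> (\<forall>u v. E u v \<longrightarrow> E v u) \<and> (\<forall>u. \<not> E u u)"

definition nbhd :: "'a set \<Rightarrow> ('a \<Rightarrow> 'a \<Rightarrow> bool) \<Rightarrow> 'a \<Rightarrow> 'a set" where
  "nbhd V E u = {w \<in> V. E u w}"

definition is_fort :: "'a set \<Rightarrow> ('a \<Rightarrow> 'a \<Rightarrow> bool) \<Rightarrow> 'a set \<Rightarrow> bool" where
  "is_fort V E F \<longleftrightarrow> F \<noteq> {} \<and> F \<subseteq> V \<and>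
     (\<forall>u \<in> V - F. card (nbhd V E u \<inter> F) \<noteq> 1)"

text \<open>Closure under the standard colour change rule: the set obtained from C by
  repeatedly letting a filled vertex u force its unique non-filled neighbour v.\<close>
inductive_set closure_zf :: "'a set \<Rightarrow> ('a \<Rightarrow> 'a \<Rightarrow> bool) \<Rightarrow> 'a set \<Rightarrow> 'a set"
  for V E C where
  base: "c \<in> C \<Longrightarrow> c \<in> closure_zf V E C"
| force: "\<lbrakk> u \<in> closure_zf V E C; v \<in> nbhd V E u;
            \<forall>w \<in> nbhd V E u - {v}. w \<in> closure_zf V E C \<rbrakk> \<Longrightarrow> v \<in> closure_zf V E C"

end

theory Submission
  imports Defs
begin

text \<open>For a 0/1 vector \<open>x\<close> with support \<open>F\<close>, each sum of \<open>x\<close> over a set of vertices counts the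
  vertices of \<open>F\<close> in that set. Hence (a) says \<open>F \<noteq> {}\<close>, and inequality (b) for the edge \<open>uv\<close> fails
  exactly when \<open>u \<notin> F\<close>, \<open>v \<in> F\<close> and \<open>v\<close> is the only neighbour of \<open>u\<close> in \<open>F\<close>; so (b) is the fort
  condition. Finally, if no vertex outside \<open>F\<close> has exactly one neighbour in \<open>F\<close>, no vertex of \<open>F\<close>
  can ever be forced, so \<open>F\<close> avoids \<open>cl(C)\<close> as soon as it avoids \<open>C\<close>.\<close>

lemma sum_zero_one_eq_card:
  fixes x :: "'a \<Rightarrow> int"
  assumes "finite S" and "\<forall>v \<in> S. x v = 0 \<or> x v = 1"
  shows "(\<Sum>v\<in>S. x v) = int (card {v \<in> S. x v = 1})"
proof -
  have "(\<Sum>v\<in>S. x v) = (\<Sum>v\<in>S. if x v = 1 then 1 else 0)"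
    using assms(2) by (intro sum.cong) auto
  also have "\<dots> = int (card {v \<in> S. x v = 1})"
    using assms(1) by (simp add: sum.If_cases Int_def)
  finally show ?thesis .
qed

lemma card_eq_1_iff_Diff_singleton_empty: "card A = 1 \<longleftrightarrow> (\<exists>a \<in> A. A - {a} = {})"
  by (auto simp: card_1_singleton_iff)

lemma ball_nbhd_swap:
  assumes "\<forall>u v. E u v \<longrightarrow> E v u"
  shows "(\<forall>v \<in> V. \<forall>u \<in> nbhd V E v. P u v) \<longleftrightarrow> (\<forall>u \<in> V. \<forall>v \<in> nbhd V E u. P u v)"
proof -
  have "v \<in> V \<and> u \<in> nbhd V E v \<longleftrightarrow> u \<in> V \<and> v \<in> nbhd V E u" for u v
    using assms unfolding nbhd_def by auto
  then show ?thesis by meson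
qed

lemma fort_condition_iff_edgewise:
  assumes "\<forall>u v. E u v \<longrightarrow> E v u"
  shows "(\<forall>u \<in> V - F. card (nbhd V E u \<inter> F) \<noteq> 1) \<longleftrightarrow>
    (\<forall>v \<in> V. \<forall>u \<in> nbhd V E v. \<not> (u \<notin> F \<and> v \<in> F \<and> (nbhd V E u - {v}) \<inter> F = {}))"
proof -
  have h: "card (nbhd V E u \<inter> F) = 1 \<longleftrightarrow> (\<exists>v \<in> nbhd V E u. v \<in> F \<and> (nbhd V E u - {v}) \<inter> F = {})"
    for u
    unfolding card_eq_1_iff_Diff_singleton_empty by blast
  show ?thesis
    unfolding h by (subst ball_nbhd_swap[OF assms]) blast
qed

lemma neighbour_inequality_iff:
  fixes x :: "'a \<Rightarrow> int"
  assumes "finite V" and "\<forall>v \<in> V. x v = 0 \<or> x v = 1" and "u \<in> V" and "v \<in> V"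
  defines "F \<equiv> {v \<in> V. x v = 1}"
  shows "x u - x v + (\<Sum>w \<in> nbhd V E u - {v}. x w) \<ge> 0 \<longleftrightarrow>
    \<not> (u \<notin> F \<and> v \<in> F \<and> (nbhd V E u - {v}) \<inter> F = {})"
proof -
  let ?N = "nbhd V E u - {v}"
  have "?N \<subseteq> V" unfolding nbhd_def by blast
  then have "finite ?N"
    using assms(1) by (rule finite_subset)
  then have "(\<Sum>w \<in> ?N. x w) = int (card {w \<in> ?N. x w = 1})"
    using \<open>?N \<subseteq> V\<close> assms(2) by (intro sum_zero_one_eq_card) auto
  also have "{w \<in> ?N. x w = 1} = ?N \<inter> F"
    using \<open>?N \<subseteq> V\<close> unfolding F_def by blast
  finally have sum_eq: "(\<Sum>w \<in> ?N. x w) = int (card (?N \<inter> F))" .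
  have "x u = 0 \<or> x u = 1" and "x v = 0 \<or> x v = 1"
    using assms(2-4) by auto
  then have "x u - x v + (\<Sum>w \<in> ?N. x w) \<ge> 0 \<longleftrightarrow> \<not> (x u = 0 \<and> x v = 1 \<and> card (?N \<inter> F) = 0)"
    unfolding sum_eq by auto
  moreover have "card (?N \<inter> F) = 0 \<longleftrightarrow> ?N \<inter> F = {}"
    using \<open>finite ?N\<close> by simp
  moreover have "u \<notin> F \<longleftrightarrow> x u = 0" and "v \<in> F \<longleftrightarrow> x v = 1"
    using assms(2-4) unfolding F_def by auto
  ultimately show ?thesis by simp
qed

lemma neighbour_inequalities_iff_fort_condition:
  fixes x :: "'a \<Rightarrow> int"
  assumes "finite V" and "\<forall>u v. E u v \<longrightarrow> E v u" and "\<forall>v \<in> V. x v = 0 \<or> x v = 1"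
  defines "F \<equiv> {v \<in> V. x v = 1}"
  shows "(\<forall>v \<in> V. \<forall>u \<in> nbhd V E v. x u - x v + (\<Sum>w \<in> nbhd V E u - {v}. x w) \<ge> 0)
    \<longleftrightarrow> (\<forall>u \<in> V - F. card (nbhd V E u \<inter> F) \<noteq> 1)"
proof -
  have "(\<forall>v \<in> V. \<forall>u \<in> nbhd V E v. x u - x v + (\<Sum>w \<in> nbhd V E u - {v}. x w) \<ge> 0)
      \<longleftrightarrow> (\<forall>v \<in> V. \<forall>u \<in> nbhd V E v. \<not> (u \<notin> F \<and> v \<in> F \<and> (nbhd V E u - {v}) \<inter> F = {}))"
    unfolding F_def
    by (intro ball_cong refl neighbour_inequality_iff[OF assms(1,3)]) (auto simp: nbhd_def)
  also have "\<dots> \<longleftrightarrow> (\<forall>u \<in> V - F. card (nbhd V E u \<inter> F) \<noteq> 1)"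
    using fort_condition_iff_edgewise[OF assms(2)] by simp
  finally show ?thesis .
qed

lemma closure_zf_subset:
  assumes "C \<subseteq> V"
  shows "closure_zf V E C \<subseteq> V"
proof
  fix w assume "w \<in> closure_zf V E C"
  then show "w \<in> V"
  proof induction
    case (base c)
    then show ?case using assms by blast
  next
    case (force u v)
    from \<open>v \<in> nbhd V E u\<close> show ?case by (simp add: nbhd_def)
  qed
qed

lemma closure_zf_superset: "C \<subseteq> closure_zf V E C"
  using closure_zf.base by (rule subsetI)

lemma fort_condition_disjoint_closure_zf_iff:
  assumes "C \<subseteq> V"
    and fort: "\<forall>u \<in> V - F. card (nbhd V E u \<inter> F) \<noteq> 1"
  shows "F \<inter> closure_zf V E C = {} \<longleftrightarrow> F \<inter> C = {}"
proof
  have "F \<inter> C \<subseteq> F \<inter> closure_zf V E C"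
    by (rule Int_mono[OF order_refl closure_zf_superset])
  then show "F \<inter> C = {}" if "F \<inter> closure_zf V E C = {}"
    using that by simp
next
  assume "F \<inter> C = {}"
  have "w \<notin> F" if "w \<in> closure_zf V E C" for w
    using that
  proof (induction rule: closure_zf.induct)
    case (base c)
    then show ?case using \<open>F \<inter> C = {}\<close> by blast
  next
    case (force u v)
    have "u \<in> V"
      using closure_zf_subset[OF assms(1)] force.hyps(1) by blast
    show ?case
    proof
      assume "v \<in> F"
      moreover have "w \<notin> F" if "w \<in> nbhd V E u - {v}" for w
        using force.IH(2) that by blast
      ultimately have "nbhd V E u \<inter> F = {v}"
        using force.hyps(2) by blast
      then have "card (nbhd V E u \<inter> F) = 1" by simp
      with fort \<open>u \<in> V\<close> force.IH(1) show False by blast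
    qed
  qed
  then show "F \<inter> closure_zf V E C = {}" by blast
qed

theorem theorem5p3:
  fixes V :: "'a set" and E :: "'a \<Rightarrow> 'a \<Rightarrow> bool" and C :: "'a set"
    and x :: "'a \<Rightarrow> int"
  assumes "simple_graph V E"
    and "C \<subseteq> V"
    and "\<forall>v \<in> V. x v = 0 \<or> x v = 1"
  shows "(is_fort V E {v \<in> V. x v = 1} \<and> {v \<in> V. x v = 1} \<subseteq> V - closure_zf V E C)
     \<longleftrightarrow> ((\<Sum>v\<in>V. x v) \<ge> 1
          \<and> (\<forall>v \<in> V. \<forall>u \<in> nbhd V E v. x u - x v + (\<Sum>w \<in> nbhd V E u - {v}. x w) \<ge> 0)
          \<and> (\<forall>v \<in> C. x v = 0))"
proof -
  define F where "F = {v \<in> V. x v = 1}"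
  have "finite V" and sym: "\<forall>u v. E u v \<longrightarrow> E v u"
    using assms(1) unfolding simple_graph_def by blast+
  have a: "(\<Sum>v\<in>V. x v) \<ge> 1 \<longleftrightarrow> F \<noteq> {}"
    using sum_zero_one_eq_card[OF \<open>finite V\<close> assms(3)] \<open>finite V\<close>
    unfolding F_def by (auto simp: Suc_le_eq card_gt_0_iff)
  note b = neighbour_inequalities_iff_fort_condition[OF \<open>finite V\<close> sym assms(3), folded F_def]
  have c: "(\<forall>v \<in> C. x v = 0) \<longleftrightarrow> F \<inter> C = {}"
    using assms(2,3) unfolding F_def by fastforce
  have "F \<subseteq> V"
    unfolding F_def by blast
  have "F \<subseteq> V - closure_zf V E C \<longleftrightarrow> F \<inter> C = {}"
    if "\<forall>u \<in> V - F. card (nbhd V E u \<inter> F) \<noteq> 1"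
    using fort_condition_disjoint_closure_zf_iff[OF assms(2) that] \<open>F \<subseteq> V\<close> by blast
  with \<open>F \<subseteq> V\<close> show ?thesis
    unfolding F_def[symmetric] is_fort_def a b c by blast
qed

end
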